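(* Let $\mathcal{H}$ be a real Hilbert space, let $A\colon \mathcal{H}\rightrightarrows\mathcal{H}$ be maximally monotone and $m$-strongly monotone, let $B\colon \mathcal{H}\to\mathcal{H}$ be monotone and $L$-Lipschitz continuous, and suppose $(A+B)^{-1}(0)\neq\varnothing$. Let $\lambda\in\left(0,\frac{1}{2L}\right)$. Given $x_0,x_{-1}\in\mathcal{H}$, define the sequence $(x_k)$ by $$x_{k+1} = J_{\lambda A}\bigl( x_k - 2\lambda B(x_k) +\lambda B(x_{k-1}) \bigr) \quad\forall k\in\mathbb{N}.$$ Then $(A+B)^{-1}(0)$ consists of a single point and $(x_k)$ converges $R$-linearly to it.
   Context: $J_{\lambda A}:=(I+\lambda A)^{-1}$ is the resolvent. $A$ is $m$-strongly monotone if $m>0$ and $\langle x-y,u-v\rangle\geq m\|x-y\|^2$ for all $(x,u),(y,v)$ in the graph of $A$. A sequence $(x_k)$ converges $R$-linearly to $x^*$ if there exist $C\geq 0$ and $q\in(0,1)$ with $\|x_k-x^*\|\leq Cq^k$ for all $k$. *)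

theory Defs
  imports "HOL-Analysis.Analysis"
begin

definition monotone_op :: "('a::real_inner \<Rightarrow> 'a set) \<Rightarrow> bool" where
  "monotone_op A \<longleftrightarrow>
     (\<forall>x y u v. u \<in> A x \<longrightarrow> v \<in> A y \<longrightarrow> inner (x - y) (u - v) \<ge> 0)"

definition maximally_monotone :: "('a::real_inner \<Rightarrow> 'a set) \<Rightarrow> bool" where
  "maximally_monotone A \<longleftrightarrow> monotone_op A \<and>
     (\<forall>x u. (\<forall>y v. v \<in> A y \<longrightarrow> inner (x - y) (u - v) \<ge> 0) \<longrightarrow> u \<in> A x)"

definition strongly_monotone :: "real \<Rightarrow> ('a::real_inner \<Rightarrow> 'a set) \<Rightarrow> bool" where
  "strongly_monotone m A \<longleftrightarrow> m > 0 \<and>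
     (\<forall>x y u v. u \<in> A x \<longrightarrow> v \<in> A y \<longrightarrow> inner (x - y) (u - v) \<ge> m * (norm (x - y))\<^sup>2)"

definition monotone_fun :: "('a::real_inner \<Rightarrow> 'a) \<Rightarrow> bool" where
  "monotone_fun B \<longleftrightarrow> (\<forall>x y. inner (x - y) (B x - B y) \<ge> 0)"

text \<open>Resolvent J_{lam A} = (I + lam A)^{-1}, as a set-valued inverse:
  x \<in> J z iff z \<in> x + lam A x.\<close>
definition resolvent :: "real \<Rightarrow> ('a::real_inner \<Rightarrow> 'a set) \<Rightarrow> 'a \<Rightarrow> 'a set" where
  "resolvent lam A z = {x. \<exists>u \<in> A x. z = x + lam *\<^sub>R u}"

definition zeros_sum :: "('a::real_inner \<Rightarrow> 'a set) \<Rightarrow> ('a \<Rightarrow> 'a) \<Rightarrow> 'a set" where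
  "zeros_sum A B = {z. \<exists>u \<in> A z. u + B z = 0}"

definition R_linear_conv :: "(nat \<Rightarrow> 'a::real_normed_vector) \<Rightarrow> 'a \<Rightarrow> bool" where
  "R_linear_conv x xs \<longleftrightarrow> (\<exists>C q. C \<ge> 0 \<and> 0 < q \<and> q < 1 \<and> (\<forall>k. norm (x k - xs) \<le> C * q ^ k))"

end

theory Submission
  imports Defs
begin

text \<open>For a zero \<open>z\<close> of \<open>A + B\<close>, the forward-reflected-backward energy
  \<open>E(x\<^sub>k\<^sub>-\<^sub>1, x\<^sub>k) = \<parallel>x\<^sub>k - z\<parallel>\<^sup>2 - 2\<lambda>\<langle>x\<^sub>k - z, B x\<^sub>k - B x\<^sub>k\<^sub>-\<^sub>1\<rangle> + \<lambda>L\<parallel>x\<^sub>k - x\<^sub>k\<^sub>-\<^sub>1\<parallel>\<^sup>2\<close>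
  drops in each step by at least \<open>2\<lambda>m\<parallel>x\<^sub>k\<^sub>+\<^sub>1 - z\<parallel>\<^sup>2 + (1 - 2\<lambda>L)\<parallel>x\<^sub>k\<^sub>+\<^sub>1 - x\<^sub>k\<parallel>\<^sup>2\<close>: this
  combines strong monotonicity of \<open>A\<close> at the resolvent step, monotonicity of \<open>B\<close>, and
  Young's inequality for the reflected Lipschitz term. By Young's inequality again the energy
  is bounded above by a multiple of the same two squares, so it contracts by a fixed factor
  \<open>1/(1 + \<epsilon>)\<close>; and since \<open>2\<lambda>L < 1\<close> it dominates \<open>(1 - \<lambda>L)\<parallel>x\<^sub>k - z\<parallel>\<^sup>2\<close>, which gives
  R-linear convergence. Uniqueness of the zero is immediate from strong monotonicity.\<close>

lemma zeros_sum_iff: "z \<in> zeros_sum A B \<longleftrightarrow> - B z \<in> A z"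
  unfolding zeros_sum_def by (simp add: eq_neg_iff_add_eq_0[symmetric])

lemma strongly_monotoneD:
  assumes "strongly_monotone m A" and "u \<in> A x" and "v \<in> A y"
  shows "m * (norm (x - y))\<^sup>2 \<le> inner (x - y) (u - v)"
  using assms unfolding strongly_monotone_def by blast

lemma zeros_sum_unique:
  assumes "strongly_monotone m A" and "monotone_fun B"
    and "z \<in> zeros_sum A B" and "w \<in> zeros_sum A B"
  shows "w = z"
proof -
  have "m * (norm (w - z))\<^sup>2 \<le> inner (w - z) (- B w - - B z)"
    using assms(4,3) unfolding zeros_sum_iff by (rule strongly_monotoneD[OF assms(1)])
  also have "\<dots> = - inner (w - z) (B w - B z)"
    by (simp add: inner_diff_right)
  also have "\<dots> \<le> 0"
    using assms(2) by (simp add: monotone_fun_def)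
  finally show ?thesis
    using assms(1) by (simp add: strongly_monotone_def mult_le_0_iff)
qed

lemma abs_inner_Young:
  fixes w v d :: "'a::real_inner"
  assumes "0 \<le> L" and "norm v \<le> L * norm d"
  shows "2 * \<bar>inner w v\<bar> \<le> L * ((norm w)\<^sup>2 + (norm d)\<^sup>2)"
proof -
  have "\<bar>inner w v\<bar> \<le> norm w * norm v"
    by (rule Cauchy_Schwarz_ineq2)
  also have "\<dots> \<le> norm w * (L * norm d)"
    using assms(2) by (simp add: mult_left_mono)
  finally have "2 * \<bar>inner w v\<bar> \<le> L * (2 * norm w * norm d)"
    by (simp add: mult.left_commute)
  also have "\<dots> \<le> L * ((norm w)\<^sup>2 + (norm d)\<^sup>2)"
    using assms(1) sum_squares_bound[of "norm w" "norm d"] by (intro mult_left_mono) simp_all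
  finally show ?thesis .
qed

definition frb_energy :: "real \<Rightarrow> real \<Rightarrow> ('a::real_inner \<Rightarrow> 'a) \<Rightarrow> 'a \<Rightarrow> 'a \<Rightarrow> 'a \<Rightarrow> real" where
  "frb_energy lam L B z p q =
     (norm (q - z))\<^sup>2 - 2 * lam * inner (q - z) (B q - B p) + lam * L * (norm (q - p))\<^sup>2"

lemma frb_energy_bounds:
  fixes p q z :: "'a::real_inner"
  assumes "0 < lam" and "0 \<le> L" and "norm (B q - B p) \<le> L * norm (q - p)"
  shows frb_energy_lower: "(1 - lam * L) * (norm (q - z))\<^sup>2 \<le> frb_energy lam L B z p q"
    and frb_energy_upper: "frb_energy lam L B z p q
           \<le> (1 + lam * L) * (norm (q - z))\<^sup>2 + 2 * lam * L * (norm (q - p))\<^sup>2"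
proof -
  have "2 * \<bar>inner (q - z) (B q - B p)\<bar> \<le> L * ((norm (q - z))\<^sup>2 + (norm (q - p))\<^sup>2)"
    using assms(2,3) by (rule abs_inner_Young)
  then have "lam * (2 * \<bar>inner (q - z) (B q - B p)\<bar>)
      \<le> lam * (L * ((norm (q - z))\<^sup>2 + (norm (q - p))\<^sup>2))"
    using assms(1) by (simp add: mult_left_mono)
  then have h: "\<bar>2 * lam * inner (q - z) (B q - B p)\<bar>
      \<le> lam * L * (norm (q - z))\<^sup>2 + lam * L * (norm (q - p))\<^sup>2"
    using assms(1) by (simp add: abs_mult mult.assoc mult.left_commute distrib_left)
  show "(1 - lam * L) * (norm (q - z))\<^sup>2 \<le> frb_energy lam L B z p q"
    using abs_le_D1[OF h] unfolding frb_energy_def left_diff_distrib by linarith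
  show "frb_energy lam L B z p q
           \<le> (1 + lam * L) * (norm (q - z))\<^sup>2 + 2 * lam * L * (norm (q - p))\<^sup>2"
    using abs_le_D2[OF h] unfolding frb_energy_def distrib_right by linarith
qed

lemma frb_energy_descent:
  fixes A :: "'a::real_inner \<Rightarrow> 'a set"
  assumes "strongly_monotone m A" and "monotone_fun B" and "- B z \<in> A z"
    and "0 < lam" and "0 \<le> L" and "norm (B p1 - B p0) \<le> L * norm (p1 - p0)"
    and "p2 \<in> resolvent lam A (p1 - (2 * lam) *\<^sub>R B p1 + lam *\<^sub>R B p0)"
  shows "frb_energy lam L B z p1 p2 + 2 * lam * m * (norm (p2 - z))\<^sup>2
           + (1 - 2 * lam * L) * (norm (p2 - p1))\<^sup>2 \<le> frb_energy lam L B z p0 p1"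
proof -
  obtain u where "u \<in> A p2" and u: "p1 - (2 * lam) *\<^sub>R B p1 + lam *\<^sub>R B p0 = p2 + lam *\<^sub>R u"
    using assms(7) unfolding resolvent_def by blast
  have "m * (norm (p2 - z))\<^sup>2 \<le> inner (p2 - z) (u - - B z)"
    using assms(1) \<open>u \<in> A p2\<close> assms(3) by (rule strongly_monotoneD)
  then have "lam * (m * (norm (p2 - z))\<^sup>2) \<le> lam * inner (p2 - z) (u + B z)"
    using assms(4) by (simp add: mult_left_mono)
  then have strong: "2 * lam * m * (norm (p2 - z))\<^sup>2
      \<le> 2 * (inner (p2 - z) (lam *\<^sub>R u) + lam * inner (p2 - z) (B z))"
    by (simp add: algebra_simps)
  have mono: "0 \<le> 2 * lam * inner (p2 - z) (B p2 - B z)"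
    using assms(2,4) by (simp add: monotone_fun_def)
  have "2 * \<bar>inner (p2 - p1) (B p1 - B p0)\<bar> \<le> L * ((norm (p2 - p1))\<^sup>2 + (norm (p1 - p0))\<^sup>2)"
    using assms(5,6) by (rule abs_inner_Young)
  then have "- (L * ((norm (p2 - p1))\<^sup>2 + (norm (p1 - p0))\<^sup>2)) \<le> 2 * inner (p2 - p1) (B p1 - B p0)"
    using abs_ge_minus_self[of "inner (p2 - p1) (B p1 - B p0)"] by linarith
  then have "lam * - (L * ((norm (p2 - p1))\<^sup>2 + (norm (p1 - p0))\<^sup>2))
      \<le> lam * (2 * inner (p2 - p1) (B p1 - B p0))"
    by (rule mult_left_mono) (use assms(4) in linarith)
  then have Young: "- (lam * L * (norm (p2 - p1))\<^sup>2 + lam * L * (norm (p1 - p0))\<^sup>2)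
      \<le> 2 * lam * inner (p2 - p1) (B p1 - B p0)"
    by (simp add: algebra_simps)
  have lam_u: "lam *\<^sub>R u = p1 - p2 - (2 * lam) *\<^sub>R B p1 + lam *\<^sub>R B p0"
    using u by (simp add: algebra_simps)
  have "frb_energy lam L B z p0 p1 - frb_energy lam L B z p1 p2 - (1 - 2 * lam * L) * (norm (p2 - p1))\<^sup>2
      = 2 * (inner (p2 - z) (lam *\<^sub>R u) + lam * inner (p2 - z) (B z))
        + 2 * lam * inner (p2 - z) (B p2 - B z) + 2 * lam * inner (p2 - p1) (B p1 - B p0)
        + (lam * L * (norm (p2 - p1))\<^sup>2 + lam * L * (norm (p1 - p0))\<^sup>2)"
    unfolding frb_energy_def lam_u power2_norm_eq_inner
    by (simp add: inner_commute algebra_simps)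
  with strong mono Young show ?thesis
    by linarith
qed

lemma frb_energy_contraction:
  fixes A :: "'a::real_inner \<Rightarrow> 'a set"
  assumes "strongly_monotone m A" and "monotone_fun B" and "- B z \<in> A z"
    and "0 < lam" and "L-lipschitz_on UNIV B"
    and "p2 \<in> resolvent lam A (p1 - (2 * lam) *\<^sub>R B p1 + lam *\<^sub>R B p0)"
    and "0 \<le> eps" and "eps * (1 + lam * L) \<le> 2 * lam * m"
    and "eps * (2 * lam * L) \<le> 1 - 2 * lam * L"
  shows "(1 + eps) * frb_energy lam L B z p1 p2 \<le> frb_energy lam L B z p0 p1"
proof -
  have L: "0 \<le> L"
    using assms(5) by (rule lipschitz_on_nonneg)
  have lip: "norm (B p - B q) \<le> L * norm (p - q)" for p q
    using assms(5) by (simp add: lipschitz_on_def dist_norm)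
  have "eps * frb_energy lam L B z p1 p2
      \<le> eps * ((1 + lam * L) * (norm (p2 - z))\<^sup>2 + 2 * lam * L * (norm (p2 - p1))\<^sup>2)"
    using frb_energy_upper[OF assms(4) L lip] assms(7) by (rule mult_left_mono)
  also have "\<dots> = (eps * (1 + lam * L)) * (norm (p2 - z))\<^sup>2
      + (eps * (2 * lam * L)) * (norm (p2 - p1))\<^sup>2"
    by (simp add: algebra_simps)
  also have "\<dots> \<le> 2 * lam * m * (norm (p2 - z))\<^sup>2 + (1 - 2 * lam * L) * (norm (p2 - p1))\<^sup>2"
    using assms(8,9) by (intro add_mono mult_right_mono) simp_all
  finally show ?thesis
    using frb_energy_descent[OF assms(1-4) L lip assms(6)] by (simp add: distrib_right)
qed

lemma frb_contraction_factor_exists: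
  fixes lam L m :: real
  assumes "0 < lam" and "0 \<le> L" and "0 < m" and "2 * L * lam < 1"
  shows "\<exists>eps > 0. eps * (1 + lam * L) \<le> 2 * lam * m \<and> eps * (2 * lam * L) \<le> 1 - 2 * lam * L"
proof (intro exI conjI)
  define eps where "eps = min (2 * lam * m / (1 + lam * L)) (1 - 2 * lam * L)"
  have "0 \<le> lam * L" and "2 * lam * L < 1"
    using assms by (simp_all add: mult.commute mult.left_commute)
  then show "0 < eps"
    using assms(1,3) by (simp add: eps_def)
  have "eps \<le> 2 * lam * m / (1 + lam * L)"
    by (simp add: eps_def)
  then show "eps * (1 + lam * L) \<le> 2 * lam * m"
    using \<open>0 \<le> lam * L\<close> by (simp add: pos_le_divide_eq)
  have "eps * (2 * lam * L) \<le> eps"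
    using \<open>0 < eps\<close> \<open>2 * lam * L < 1\<close> by (simp add: mult_le_cancel_left1)
  then show "eps * (2 * lam * L) \<le> 1 - 2 * lam * L"
    unfolding eps_def by linarith
qed

lemma geometric_decay:
  fixes f :: "nat \<Rightarrow> real"
  assumes "\<And>k. f (Suc k) \<le> r * f k" and "0 \<le> r"
  shows "f k \<le> r ^ k * f 0"
proof (induction k)
  case (Suc k)
  have "f (Suc k) \<le> r * f k"
    by (rule assms(1))
  also have "\<dots> \<le> r * (r ^ k * f 0)"
    using Suc assms(2) by (rule mult_left_mono)
  finally show ?case
    by simp
qed simp

lemma R_linear_convI_square:
  assumes "0 \<le> c" and "0 < r" and "r < 1" and "\<And>k. (norm (x k - z))\<^sup>2 \<le> c * r ^ k"
  shows "R_linear_conv x z"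
proof -
  have "norm (x k - z) \<le> sqrt c * sqrt r ^ k" for k
    using real_le_rsqrt[OF assms(4)] by (simp add: real_sqrt_mult real_sqrt_power)
  then show ?thesis
    unfolding R_linear_conv_def using assms(1-3) by (intro exI[of _ "sqrt c"] exI[of _ "sqrt r"]) simp
qed

lemma R_linear_convI_energy:
  fixes V :: "nat \<Rightarrow> real"
  assumes "0 < eps" and "\<And>k. (1 + eps) * V (Suc k) \<le> V k"
    and "0 < c" and "\<And>k. c * (norm (x k - z))\<^sup>2 \<le> V k"
  shows "R_linear_conv x z"
proof -
  define r where "r = 1 / (1 + eps)"
  have r: "0 < r" "r < 1"
    using assms(1) by (simp_all add: r_def)
  have "V (Suc k) \<le> r * V k" for k
    using assms(1,2) by (simp add: r_def field_simps)
  then have decay: "V k \<le> r ^ k * V 0" for k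
    using r(1) by (intro geometric_decay) simp_all
  have "(norm (x k - z))\<^sup>2 \<le> V 0 / c * r ^ k" for k
  proof (rule mult_left_le_imp_le)
    have "c * (norm (x k - z))\<^sup>2 \<le> r ^ k * V 0"
      using assms(4) decay order_trans by blast
    also have "\<dots> = c * (V 0 / c * r ^ k)"
      using assms(3) by simp
    finally show "c * (norm (x k - z))\<^sup>2 \<le> c * (V 0 / c * r ^ k)" .
  qed (rule assms(3))
  moreover have "0 \<le> V 0"
    using assms(3) assms(4)[of 0] by (meson order_trans mult_nonneg_nonneg less_imp_le zero_le_power2)
  ultimately show ?thesis
    using assms(3) r by (intro R_linear_convI_square[where c = "V 0 / c" and r = r]) simp_all
qed

lemma frb_R_linear_conv:
  fixes A :: "'a::real_inner \<Rightarrow> 'a set"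
  assumes "strongly_monotone m A" and "monotone_fun B" and "z \<in> zeros_sum A B"
    and "L-lipschitz_on UNIV B" and "0 < lam" and "2 * L * lam < 1"
    and "\<And>k. y (Suc (Suc k)) \<in>
           resolvent lam A (y (Suc k) - (2 * lam) *\<^sub>R B (y (Suc k)) + lam *\<^sub>R B (y k))"
  shows "R_linear_conv (\<lambda>k. y (Suc k)) z"
proof -
  define V where "V k = frb_energy lam L B z (y k) (y (Suc k))" for k
  have L: "0 \<le> L"
    using assms(4) by (rule lipschitz_on_nonneg)
  have lip: "norm (B p - B q) \<le> L * norm (p - q)" for p q
    using assms(4) by (simp add: lipschitz_on_def dist_norm)
  have m: "0 < m"
    using assms(1) by (simp add: strongly_monotone_def)
  obtain eps where eps: "0 < eps" "eps * (1 + lam * L) \<le> 2 * lam * m"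
      "eps * (2 * lam * L) \<le> 1 - 2 * lam * L"
    using frb_contraction_factor_exists[OF assms(5) L m assms(6)] by blast
  have zA: "- B z \<in> A z"
    using assms(3) by (simp add: zeros_sum_iff)
  show ?thesis
  proof (rule R_linear_convI_energy[where V = V])
    show "(1 + eps) * V (Suc k) \<le> V k" for k
      unfolding V_def
      by (rule frb_energy_contraction[OF assms(1,2) zA assms(5,4) assms(7)[of k] _ eps(2,3)])
        (use eps(1) in simp)
    show "(1 - lam * L) * (norm (y (Suc k) - z))\<^sup>2 \<le> V k" for k
      unfolding V_def using assms(5) L lip by (rule frb_energy_lower)
    show "0 < 1 - lam * L"
      using assms(6) L by (simp add: mult.commute mult.left_commute)
  qed (rule eps(1))
qed

theorem theorem2p9:
  fixes A :: "'a::{real_inner, complete_space} \<Rightarrow> 'a set"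
    and B :: "'a \<Rightarrow> 'a"
    and m L lam :: real
    and x :: "nat \<Rightarrow> 'a" and xm1 :: 'a
  assumes "maximally_monotone A"
    and "strongly_monotone m A"
    and "monotone_fun B"
    and "L-lipschitz_on UNIV B"
    and "zeros_sum A B \<noteq> {}"
    and "0 < lam" and "2 * L * lam < 1"
    and "x 1 \<in> resolvent lam A (x 0 - (2 * lam) *\<^sub>R B (x 0) + lam *\<^sub>R B xm1)"
    and "\<And>k. x (Suc (Suc k)) \<in>
           resolvent lam A (x (Suc k) - (2 * lam) *\<^sub>R B (x (Suc k)) + lam *\<^sub>R B (x k))"
  shows "\<exists>z. zeros_sum A B = {z} \<and> R_linear_conv x z"
proof -
  obtain z where z: "z \<in> zeros_sum A B"
    using assms(5) by blast
  then have "zeros_sum A B = {z}"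
    using zeros_sum_unique[OF assms(2,3)] by blast
  moreover
  define y where "y k = (case k of 0 \<Rightarrow> xm1 | Suc j \<Rightarrow> x j)" for k
  have "y (Suc (Suc k)) \<in>
      resolvent lam A (y (Suc k) - (2 * lam) *\<^sub>R B (y (Suc k)) + lam *\<^sub>R B (y k))" for k
    using assms(8,9) by (cases k) (simp_all add: y_def)
  then have "R_linear_conv (\<lambda>k. y (Suc k)) z"
    by (rule frb_R_linear_conv[OF assms(2,3) z assms(4,6,7)])
  then have "R_linear_conv x z"
    by (simp add: y_def)
  ultimately show ?thesis
    by blast
qed

end
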